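(* Let $g\in(\frac12,1)$ and let $(Y_t)_{t\ge0}$ be a stable subordinator of index $g$ normalised by $\mathbb E[e^{-\lambda Y_t}]=e^{-t\lambda^g}$ for $\lambda,t>0$; let $p_t$ denote the density of $Y_t$. For $\ell_1,\ell_2>0$ set $$K(\ell_1,\ell_2)=\int_0^\infty \ell'\,\frac{p_{\ell_1}(\ell')}{\ell_1}\,\frac{p_{\ell_2}(\ell')}{\ell_2}\,d\ell'.$$ Then for every $\ell_1>0$ and $x\in\mathbb R\setminus\{0\}$, $$\int_0^\infty K(\ell_1,\ell_2)\,\ell_2^{ix}\,d\ell_2=\frac{\sinh(g\pi x)}{\sinh(\pi x)}\,\ell_1^{ix-1},$$ and for $x=0$ the left side equals $g\,\ell_1^{-1}$ (the limit of the right side). *)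

theory Defs
  imports "HOL-Analysis.Analysis"
begin

definition stable_subordinator_density :: "real \<Rightarrow> (real \<Rightarrow> real \<Rightarrow> real) \<Rightarrow> bool" where
  "stable_subordinator_density g p \<longleftrightarrow>
     (\<forall>t>0. p t \<in> borel_measurable lborel
        \<and> (\<forall>y. 0 \<le> p t y)
        \<and> integrable lborel (p t)
        \<and> (LINT y|lborel. p t y) = 1
        \<and> (\<forall>s>0. integrable lborel (\<lambda>y. exp (- s * y) * p t y)
               \<and> (LINT y|lborel. exp (- s * y) * p t y) = exp (- t * s powr g)))"

definition Kker :: "(real \<Rightarrow> real \<Rightarrow> real) \<Rightarrow> real \<Rightarrow> real \<Rightarrow> real" where
  "Kker p l1 l2 = (LINT l:{0<..}|lborel. l * (p l1 l / l1) * (p l2 l / l2))"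

end

theory Submission
  imports Defs
begin

(* By uniqueness of the Laplace transform, the stable densities are self-similar:
   p_t(y) = t^(-1/g) p_1(t^(-1/g) y).  In logarithmic coordinates this makes
   l1 l2 K(l1, l2) the autocorrelation of the density of ln Y_1, evaluated at
   (ln l2 - ln l1)/g, so the Mellin transform of K(l1, -) at ix is
   g l1^(ix-1) phi(gx) phi(-gx), where phi is the characteristic function of ln Y_1.
   Fubini applied to Gamma(z) y^(-z) = int v^(z-1) exp(-v y) dv together with the
   Laplace transform gives E[Y_1^(-z)] = Gamma(z/g) / (g Gamma(z)) for Re z > 0, and
   by continuity also on the imaginary axis; the reflection formula
   Gamma(iy) Gamma(-iy) = pi / (y sinh(pi y)) turns g phi(gx) phi(-gx) into
   sinh(g pi x) / sinh(pi x). *)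

section \<open>The substitution \<open>y = exp v\<close> on the positive half-line\<close>

lemma nn_integral_indicator_incseq:
  fixes f :: "'a \<Rightarrow> ennreal"
  assumes "incseq A" and [measurable]: "\<And>n. A n \<in> sets M" "f \<in> borel_measurable M"
  shows "(\<integral>\<^sup>+x. f x * indicator (\<Union>n. A n) x \<partial>M) = (SUP n. \<integral>\<^sup>+x. f x * indicator (A n) x \<partial>M)"
proof -
  have "indicator (\<Union>n. A n) x = (SUP n. indicator (A n) x :: ennreal)" for x
    by (auto simp: indicator_def intro!: antisym SUP_upper2 SUP_least)
  then have "(\<integral>\<^sup>+x. f x * indicator (\<Union>n. A n) x \<partial>M) = (\<integral>\<^sup>+x. (SUP n. f x * indicator (A n) x) \<partial>M)"
    by (simp add: SUP_mult_left_ennreal)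
  also have "\<dots> = (SUP n. \<integral>\<^sup>+x. f x * indicator (A n) x \<partial>M)"
    using assms(1) by (intro nn_integral_monotone_convergence_SUP)
       (auto simp: incseq_def le_fun_def indicator_def intro!: mult_left_mono dest: monoD)
  finally show ?thesis .
qed

lemma nn_integral_Ioi_exp_subst:
  fixes f :: "real \<Rightarrow> real"
  assumes [measurable]: "f \<in> borel_measurable borel" and nonneg: "\<And>y. 0 \<le> f y"
  shows "(\<integral>\<^sup>+y. f y * indicator {0<..} y \<partial>lborel) = (\<integral>\<^sup>+v. f (exp v) * exp v \<partial>lborel)"
proof -
  have Ioi: "{0<..} = (\<Union>n::nat. {exp (- real n)..exp (real n)})"
  proof (intro equalityI subsetI)
    fix y :: real assume "y \<in> {0<..}"
    obtain n :: nat where "\<bar>ln y\<bar> \<le> real n" using real_arch_simple by blast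
    then have "exp (- real n) \<le> exp (ln y)" "exp (ln y) \<le> exp (real n)" by (simp_all add: abs_le_iff)
    with \<open>y \<in> {0<..}\<close> show "y \<in> (\<Union>n::nat. {exp (- real n)..exp (real n)})" by auto
  qed (auto intro: less_le_trans[OF exp_gt_zero])
  have UNIV: "UNIV = (\<Union>n::nat. {- real n..real n})"
  proof (intro equalityI subsetI)
    fix v :: real
    obtain n :: nat where "\<bar>v\<bar> \<le> real n" using real_arch_simple by blast
    then show "v \<in> (\<Union>n::nat. {- real n..real n})" by (auto simp: abs_le_iff intro!: exI[of _ n])
  qed auto
  have "(\<integral>\<^sup>+y. f y * indicator {0<..} y \<partial>lborel)
      = (SUP n::nat. \<integral>\<^sup>+y. f y * indicator {exp (- real n)..exp (real n)} y \<partial>lborel)"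
    unfolding Ioi
    using nn_integral_indicator_incseq[of "\<lambda>n. {exp (- real n)..exp (real n)}" lborel "\<lambda>y. ennreal (f y)"]
    by (simp add: incseq_def ennreal_mult'' ennreal_indicator)
  also have "\<dots> = (SUP n::nat. \<integral>\<^sup>+v. f (exp v) * exp v * indicator {- real n..real n} v \<partial>lborel)"
    by (intro SUP_cong refl nn_integral_substitution)
       (auto simp: set_borel_measurable_def intro!: derivative_eq_intros continuous_intros)
  also have "\<dots> = (\<integral>\<^sup>+v. f (exp v) * exp v * indicator (\<Union>n::nat. {- real n..real n}) v \<partial>lborel)"
    using nn_integral_indicator_incseq[of "\<lambda>n. {- real n..real n}" lborel "\<lambda>v. ennreal (f (exp v) * exp v)"]
    by (simp add: incseq_def ennreal_mult'' ennreal_indicator)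
  also have "\<dots> = (\<integral>\<^sup>+v. f (exp v) * exp v \<partial>lborel)"
    by (simp add: UNIV[symmetric])
  finally show ?thesis .
qed

lemma distr_exp_density_exp:
  "distr (density lborel (\<lambda>v. ennreal (exp v))) borel exp = density lborel (\<lambda>y. ennreal (indicator {0<..} y))"
proof (rule measure_eqI)
  let ?D = "distr (density lborel (\<lambda>v. ennreal (exp v))) borel exp"
  fix A assume "A \<in> sets ?D"
  then have [measurable]: "A \<in> sets borel" by simp
  have "emeasure ?D A = (\<integral>\<^sup>+v. ennreal (exp v) * indicator (exp -` A) v \<partial>lborel)"
  proof -
    have "{v. exp v \<in> A} \<in> sets borel" by measurable
    moreover have "exp -` A = {v. exp v \<in> A}" by auto
    ultimately have [measurable]: "exp -` A \<in> sets borel" by simp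
    show ?thesis by (subst emeasure_distr; simp) (subst emeasure_density; simp)
  qed
  also have "\<dots> = (\<integral>\<^sup>+v. ennreal (indicator A (exp v) * exp v) \<partial>lborel)"
    by (intro nn_integral_cong) (auto simp: indicator_def)
  also have "\<dots> = (\<integral>\<^sup>+y. ennreal (indicator A y * indicator {0<..} y) \<partial>lborel)"
    by (rule nn_integral_Ioi_exp_subst[symmetric]) auto
  also have "\<dots> = emeasure (density lborel (\<lambda>y. ennreal (indicator {0<..} y))) A"
    by (subst emeasure_density) (auto intro!: nn_integral_cong simp: indicator_def)
  finally show "emeasure ?D A = emeasure (density lborel (\<lambda>y. ennreal (indicator {0<..} y))) A" .
qed simp

lemma set_integrable_Ioi_exp_subst:
  fixes F :: "real \<Rightarrow> 'b::{banach, second_countable_topology}"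
  assumes [measurable]: "F \<in> borel_measurable borel"
  shows "integrable lborel (\<lambda>v. exp v *\<^sub>R F (exp v)) \<longleftrightarrow> set_integrable lborel {0<..} F"
proof -
  have "integrable lborel (\<lambda>v. exp v *\<^sub>R F (exp v)) \<longleftrightarrow> integrable (density lborel (\<lambda>v. ennreal (exp v))) (\<lambda>v. F (exp v))"
    by (subst integrable_density) auto
  also have "\<dots> \<longleftrightarrow> integrable (distr (density lborel (\<lambda>v. ennreal (exp v))) borel exp) F"
    by (subst integrable_distr_eq) auto
  also have "\<dots> \<longleftrightarrow> set_integrable lborel {0<..} F"
    unfolding distr_exp_density_exp set_integrable_def by (subst integrable_density) auto
  finally show ?thesis .
qed

lemma set_integral_Ioi_exp_subst:
  fixes F :: "real \<Rightarrow> 'b::{banach, second_countable_topology}"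
  assumes [measurable]: "F \<in> borel_measurable borel"
  shows "(\<integral>v. exp v *\<^sub>R F (exp v) \<partial>lborel) = (\<integral>y\<in>{0<..}. F y \<partial>lborel)"
proof -
  have "(\<integral>v. exp v *\<^sub>R F (exp v) \<partial>lborel) = (\<integral>v. F (exp v) \<partial>density lborel (\<lambda>v. ennreal (exp v)))"
    by (subst integral_density) auto
  also have "\<dots> = (\<integral>y. F y \<partial>distr (density lborel (\<lambda>v. ennreal (exp v))) borel exp)"
    by (subst integral_distr) auto
  also have "\<dots> = (\<integral>y\<in>{0<..}. F y \<partial>lborel)"
    unfolding distr_exp_density_exp set_lebesgue_integral_def by (subst integral_density) auto
  finally show ?thesis .
qed

lemma
  fixes F :: "real \<Rightarrow> 'b::{banach, second_countable_topology}"
  assumes "AE y in lborel. y \<le> 0 \<longrightarrow> F y = 0" and [measurable]: "F \<in> borel_measurable borel"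
  shows set_integrable_Ioi_iff_integrable: "set_integrable lborel {0<..} F \<longleftrightarrow> integrable lborel F"
    and set_integral_Ioi_eq_integral: "(\<integral>y\<in>{0<..}. F y \<partial>lborel) = (\<integral>y. F y \<partial>lborel)"
proof -
  have "AE y in lborel. indicator {0<..} y *\<^sub>R F y = F y"
    using assms(1) by eventually_elim (auto simp: indicator_def)
  then show "set_integrable lborel {0<..} F \<longleftrightarrow> integrable lborel F"
    and "(\<integral>y\<in>{0<..}. F y \<partial>lborel) = (\<integral>y. F y \<partial>lborel)"
    unfolding set_integrable_def set_lebesgue_integral_def
    by (simp_all add: integrable_cong_AE integral_cong_AE)
qed

section \<open>Uniqueness of the Laplace transform\<close>

lemma integrable_bounded_mult:
  fixes h f :: "'a \<Rightarrow> real"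
  assumes [measurable]: "h \<in> borel_measurable M" and bound: "\<And>x. \<bar>h x\<bar> \<le> B" and f: "integrable M f"
  shows "integrable M (\<lambda>x. h x * f x)"
proof (rule Bochner_Integration.integrable_bound)
  show "integrable M (\<lambda>x. B * \<bar>f x\<bar>)" using f by simp
  show "AE x in M. norm (h x * f x) \<le> norm (B * \<bar>f x\<bar>)"
    using bound by (intro AE_I2) (simp add: abs_mult mult_right_mono order.trans[OF abs_ge_zero bound])
qed (use f in simp)

lemma abs_integral_mult_diff_le:
  fixes h1 h2 f :: "'a \<Rightarrow> real"
  assumes [measurable]: "h1 \<in> borel_measurable M" "h2 \<in> borel_measurable M"
    and close: "\<And>y. \<bar>h1 y - h2 y\<bar> \<le> e"
    and f: "integrable M f" "\<And>y. 0 \<le> f y" and h1_f: "integrable M (\<lambda>y. h1 y * f y)"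
  shows "\<bar>(\<integral>y. h1 y * f y \<partial>M) - (\<integral>y. h2 y * f y \<partial>M)\<bar> \<le> e * (\<integral>y. f y \<partial>M)"
proof -
  have diff_int: "integrable M (\<lambda>y. (h1 y - h2 y) * f y)"
    using close by (intro integrable_bounded_mult[of _ _ e] f(1)) auto
  have "integrable M (\<lambda>y. h1 y * f y - (h1 y - h2 y) * f y)"
    using h1_f diff_int by simp
  then have "integrable M (\<lambda>y. h2 y * f y)" by (simp add: algebra_simps)
  then have "\<bar>(\<integral>y. h1 y * f y \<partial>M) - (\<integral>y. h2 y * f y \<partial>M)\<bar> = \<bar>\<integral>y. (h1 y - h2 y) * f y \<partial>M\<bar>"
    using h1_f by (simp add: left_diff_distrib)
  also have "\<dots> \<le> (\<integral>y. \<bar>(h1 y - h2 y) * f y\<bar> \<partial>M)"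
    by (rule integral_abs_bound)
  also have "\<dots> \<le> (\<integral>y. e * f y \<partial>M)"
  proof (rule integral_mono)
    show "\<bar>(h1 y - h2 y) * f y\<bar> \<le> e * f y" for y
      using close[of y] f(2)[of y] by (simp add: abs_mult mult_right_mono)
  qed (use diff_int f(1) in simp_all)
  finally show ?thesis by simp
qed

lemma integral_poly_comp_eq_if_moments_eq:
  fixes w f1 f2 :: "'a \<Rightarrow> real" and a :: "nat \<Rightarrow> real"
  assumes [measurable]: "w \<in> borel_measurable M" and w: "\<And>y. w y \<in> {0..1}"
    and f1: "integrable M f1" and f2: "integrable M f2"
    and moments: "\<And>n. (\<integral>y. w y ^ n * f1 y \<partial>M) = (\<integral>y. w y ^ n * f2 y \<partial>M)"
  shows "(\<integral>y. (\<Sum>i\<le>N. a i * w y ^ i) * f1 y \<partial>M) = (\<integral>y. (\<Sum>i\<le>N. a i * w y ^ i) * f2 y \<partial>M)"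
proof -
  have "integrable M (\<lambda>y. w y ^ i * f y)" if "integrable M f" for f and i :: nat
    using w by (intro integrable_bounded_mult[of _ _ 1] that) (auto simp: power_le_one abs_le_iff)
  then show ?thesis
    using f1 f2 by (simp add: sum_distrib_right mult.assoc moments)
qed

lemma integral_continuous_comp_eq_if_moments_eq:
  fixes w f1 f2 :: "'a \<Rightarrow> real" and \<phi> :: "real \<Rightarrow> real"
  assumes [measurable]: "w \<in> borel_measurable M" and w: "\<And>y. w y \<in> {0..1}"
    and f1: "integrable M f1" "\<And>y. 0 \<le> f1 y" and f2: "integrable M f2" "\<And>y. 0 \<le> f2 y"
    and moments: "\<And>n. (\<integral>y. w y ^ n * f1 y \<partial>M) = (\<integral>y. w y ^ n * f2 y \<partial>M)"
    and \<phi>: "continuous_on {0..1} \<phi>"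
  shows "(\<integral>y. \<phi> (w y) * f1 y \<partial>M) = (\<integral>y. \<phi> (w y) * f2 y \<partial>M)"
proof -
  define T where "T = (\<integral>y. f1 y \<partial>M)"
  have T: "T = (\<integral>y. f2 y \<partial>M)" using moments[of 0] by (simp add: T_def)
  have "0 \<le> T" using f1(2) by (simp add: T_def)
  have "continuous_on UNIV (\<lambda>u. \<phi> (max 0 (min 1 u)))"
    by (rule continuous_on_compose2[OF \<phi>]) (auto intro!: continuous_intros)
  then have "(\<lambda>y. \<phi> (max 0 (min 1 (w y)))) \<in> borel_measurable M"
    by (intro measurable_compose[OF assms(1)] borel_measurable_continuous_onI)
  moreover have "max 0 (min 1 (w y)) = w y" for y using w[of y] by simp
  ultimately have \<phi>_w_meas [measurable]: "(\<lambda>y. \<phi> (w y)) \<in> borel_measurable M" by simp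
  obtain B where "\<And>u. u \<in> {0..1} \<Longrightarrow> \<bar>\<phi> u\<bar> \<le> B"
    using compact_imp_bounded[OF compact_continuous_image[OF \<phi> compact_Icc]]
    unfolding bounded_real by blast
  then have \<phi>_int: "integrable M (\<lambda>y. \<phi> (w y) * f y)" if "integrable M f" for f
    using w that by (intro integrable_bounded_mult[of _ _ B]) auto
  have close: "\<bar>(\<integral>y. \<phi> (w y) * f1 y \<partial>M) - (\<integral>y. \<phi> (w y) * f2 y \<partial>M)\<bar> \<le> 2 * e * T" if "e > 0" for e
  proof -
    obtain P where "real_polynomial_function P" and P: "\<And>u. u \<in> {0..1} \<Longrightarrow> \<bar>\<phi> u - P u\<bar> < e"
      using Stone_Weierstrass_real_polynomial_function[OF compact_Icc \<phi> \<open>e > 0\<close>] by blast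
    then obtain a N where a: "P = (\<lambda>u. \<Sum>i\<le>N. a i * u ^ i)" using real_polynomial_function_imp_sum by blast
    have P_w_meas: "(\<lambda>y. P (w y)) \<in> borel_measurable M" unfolding a by measurable
    have "\<bar>\<phi> (w y) - P (w y)\<bar> \<le> e" for y using P[OF w] by (simp add: less_imp_le)
    note approx = abs_integral_mult_diff_le[OF \<phi>_w_meas P_w_meas this]
    show ?thesis
      using approx[OF f1 \<phi>_int[OF f1(1)]] approx[OF f2 \<phi>_int[OF f2(1)]] integral_poly_comp_eq_if_moments_eq[OF assms(1) w f1(1) f2(1) moments, of a N]
      unfolding a T_def[symmetric] T(1)[symmetric] by linarith
  qed
  have "\<bar>(\<integral>y. \<phi> (w y) * f1 y \<partial>M) - (\<integral>y. \<phi> (w y) * f2 y \<partial>M)\<bar> \<le> 0"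
  proof (rule field_le_epsilon)
    fix e :: real assume "0 < e"
    then have "2 * (e / (2 * T + 1)) * T \<le> e" using \<open>0 \<le> T\<close> by (simp add: field_simps)
    then show "\<bar>(\<integral>y. \<phi> (w y) * f1 y \<partial>M) - (\<integral>y. \<phi> (w y) * f2 y \<partial>M)\<bar> \<le> 0 + e"
      using close[of "e / (2 * T + 1)"] \<open>0 < e\<close> \<open>0 \<le> T\<close> by simp
  qed
  then show ?thesis by simp
qed

lemma integral_indicator_less_eq_if_continuous_comp_eq:
  fixes w f1 f2 :: "'a \<Rightarrow> real"
  assumes [measurable]: "w \<in> borel_measurable M" and f1: "integrable M f1" and f2: "integrable M f2"
    and comp_eq: "\<And>\<phi>. continuous_on UNIV \<phi> \<Longrightarrow> (\<integral>y. \<phi> (w y) * f1 y \<partial>M) = (\<integral>y. \<phi> (w y) * f2 y \<partial>M)"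
  shows "(\<integral>y. indicator {y. w y < c} y * f1 y \<partial>M) = (\<integral>y. indicator {y. w y < c} y * f2 y \<partial>M)"
proof -
  define ramp where "ramp k u = max 0 (min 1 (real k * (c - u)))" for k :: nat and u :: real
  have ramp_lim: "(\<lambda>k. ramp k u) \<longlonglongrightarrow> indicator {..<c} u" for u
  proof (cases "u < c")
    case True
    obtain K :: nat where K: "1 / (c - u) \<le> real K" using real_arch_simple by blast
    have "ramp k u = 1" if "K \<le> k" for k
    proof -
      have "1 \<le> real K * (c - u)" using K True by (simp add: field_simps)
      also have "\<dots> \<le> real k * (c - u)" using that True by (intro mult_right_mono) auto
      finally show ?thesis by (simp add: ramp_def)
    qed
    then show ?thesis
      using True by (intro tendsto_eventually) (auto simp: eventually_sequentially)
  next
    case False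
    then have "ramp k u = 0" for k
      using mult_nonneg_nonpos[of "real k" "c - u"] by (simp add: ramp_def)
    then show ?thesis using False by simp
  qed
  have lim: "(\<lambda>k. \<integral>y. ramp k (w y) * f y \<partial>M) \<longlonglongrightarrow> (\<integral>y. indicator {y. w y < c} y * f y \<partial>M)"
    if f: "integrable M f" for f
  proof (rule integral_dominated_convergence[where w="\<lambda>y. \<bar>f y\<bar>"])
    show "AE y in M. (\<lambda>k. ramp k (w y) * f y) \<longlonglongrightarrow> indicator {y. w y < c} y * f y"
      using tendsto_mult_right[OF ramp_lim] by (simp add: indicator_def)
    show "AE y in M. norm (ramp k (w y) * f y) \<le> \<bar>f y\<bar>" for k
      by (simp add: ramp_def abs_mult mult_left_le_one_le)
  qed (use f in \<open>auto simp: ramp_def\<close>)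
  have "continuous_on UNIV (ramp k)" for k unfolding ramp_def by (intro continuous_intros)
  then show ?thesis
    using LIMSEQ_unique[OF lim[OF f1]] lim[OF f2] by (simp add: comp_eq)
qed

lemma emeasure_density_eq_integral:
  fixes f :: "'a \<Rightarrow> real"
  assumes [measurable]: "f \<in> borel_measurable M" "A \<in> sets M"
    and "\<And>y. 0 \<le> f y" and "integrable M f"
  shows "emeasure (density M f) A = ennreal (\<integral>y. indicator A y * f y \<partial>M)"
proof -
  have "emeasure (density M f) A = (\<integral>\<^sup>+y. ennreal (indicator A y * f y) \<partial>M)"
    by (subst emeasure_density) (auto intro!: nn_integral_cong simp: indicator_def)
  also have "\<dots> = ennreal (\<integral>y. indicator A y * f y \<partial>M)"
    using assms integrable_real_mult_indicator[of A M f]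
    by (intro nn_integral_eq_integral) (auto simp: mult.commute)
  finally show ?thesis .
qed

text \<open>The weight \<open>w y = exp (- max 0 y)\<close> has the Laplace transform at \<open>n\<close> as its \<open>n\<close>-th moment;
  Weierstrass approximation then identifies the integrals of all continuous functions of \<open>w\<close>,
  and ramp functions those of the tails \<open>{a<..}\<close>.\<close>

lemma Laplace_transform_unique:
  fixes f1 f2 :: "real \<Rightarrow> real"
  assumes [measurable]: "f1 \<in> borel_measurable borel" "f2 \<in> borel_measurable borel"
    and nonneg: "\<And>y. 0 \<le> f1 y" "\<And>y. 0 \<le> f2 y"
    and f1: "integrable lborel f1" and f2: "integrable lborel f2"
    and support: "AE y in lborel. y \<le> 0 \<longrightarrow> f1 y = 0" "AE y in lborel. y \<le> 0 \<longrightarrow> f2 y = 0"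
    and Laplace: "\<And>s. 0 \<le> s \<Longrightarrow> (\<integral>y. exp (- s * y) * f1 y \<partial>lborel) = (\<integral>y. exp (- s * y) * f2 y \<partial>lborel)"
  shows "AE y in lborel. f1 y = f2 y"
proof -
  define w where "w y = exp (- max 0 y)" for y :: real
  have [measurable]: "w \<in> borel_measurable borel" unfolding w_def by measurable
  have w: "w y \<in> {0..1}" for y by (simp add: w_def)
  have moment: "(\<integral>y. w y ^ n * f y \<partial>lborel) = (\<integral>y. exp (- real n * y) * f y \<partial>lborel)"
    if [measurable]: "f \<in> borel_measurable borel" and "AE y in lborel. y \<le> 0 \<longrightarrow> f y = 0"
    for f :: "real \<Rightarrow> real" and n
    using that(2) by (intro integral_cong_AE) (auto elim!: eventually_mono simp: w_def exp_of_nat_mult[symmetric])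
  have moments_eq: "(\<integral>y. w y ^ n * f1 y \<partial>lborel) = (\<integral>y. w y ^ n * f2 y \<partial>lborel)" for n
    using moment[OF assms(1) support(1)] moment[OF assms(2) support(2)] Laplace[of "real n"] by simp
  have "(\<integral>y. \<phi> (w y) * f1 y \<partial>lborel) = (\<integral>y. \<phi> (w y) * f2 y \<partial>lborel)"
    if "continuous_on UNIV \<phi>" for \<phi>
    by (rule integral_continuous_comp_eq_if_moments_eq[OF _ w f1 nonneg(1) f2 nonneg(2) moments_eq
          continuous_on_subset[OF that]]) simp_all
  then have w_tail: "(\<integral>y. indicator {y. w y < c} y * f1 y \<partial>lborel) = (\<integral>y. indicator {y. w y < c} y * f2 y \<partial>lborel)" for c
    using f1 f2 by (intro integral_indicator_less_eq_if_continuous_comp_eq) auto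
  have tail: "(\<integral>y. indicator {a<..} y * f1 y \<partial>lborel) = (\<integral>y. indicator {a<..} y * f2 y \<partial>lborel)" for a :: real
  proof (cases "a < 0")
    case True
    have "(\<integral>y. indicator {a<..} y * f y \<partial>lborel) = (\<integral>y. exp (- 0 * y) * f y \<partial>lborel)"
      if [measurable]: "f \<in> borel_measurable borel" and "AE y in lborel. y \<le> 0 \<longrightarrow> f y = 0"
      for f :: "real \<Rightarrow> real"
      using that(2) True by (intro integral_cong_AE) (auto elim!: eventually_mono simp: indicator_def)
    then show ?thesis using assms(1,2) support Laplace[of 0] by simp
  next
    case False
    have "(\<integral>y. indicator {a<..} y * f y \<partial>lborel) = (\<integral>y. indicator {y. w y < exp (- a)} y * f y \<partial>lborel)" for f :: "real \<Rightarrow> real"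
      using False by (intro Bochner_Integration.integral_cong) (auto simp: w_def indicator_def)
    then show ?thesis using w_tail by simp
  qed
  have "density lborel f1 = density lborel f2"
    by (rule measure_eqI_lessThan) (auto simp: emeasure_density_eq_integral f1 f2 nonneg tail)
  then have "AE y in lborel. ennreal (f1 y) = ennreal (f2 y)"
    by (subst (asm) sigma_finite_measure.density_unique_iff[OF sigma_finite_lborel]) auto
  then show ?thesis using nonneg by (auto elim!: eventually_mono)
qed

section \<open>Densities of a stable subordinator\<close>

locale stable_subordinator =
  fixes g :: real and p :: "real \<Rightarrow> real \<Rightarrow> real"
  assumes index_pos: "0 < g" and density: "stable_subordinator_density g p"
begin

lemma
  assumes "0 < t"
  shows measurable_p [measurable]: "p t \<in> borel_measurable borel"
    and p_nonneg: "0 \<le> p t y"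
    and integrable_p: "integrable lborel (p t)"
  using density assms unfolding stable_subordinator_density_def by auto

lemma
  assumes "0 < t" and "0 \<le> s"
  shows integrable_Laplace_p: "integrable lborel (\<lambda>y. exp (- s * y) * p t y)"
    and Laplace_p: "(\<integral>y. exp (- s * y) * p t y \<partial>lborel) = exp (- t * s powr g)"
  using density assms unfolding stable_subordinator_density_def
  by (cases "s = 0"; auto)+

lemma AE_p_eq_0_nonpos:
  assumes "0 < t"
  shows "AE y in lborel. y \<le> 0 \<longrightarrow> p t y = 0"
proof -
  define h where "h y = - y * indicator {..<0} y * p t y" for y :: real
  have [measurable]: "h \<in> borel_measurable borel" unfolding h_def using assms by measurable
  have h_nonneg: "0 \<le> h y" for y
    using p_nonneg[OF assms, of y] by (auto simp: h_def indicator_def mult_nonpos_nonneg)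
  have h_le: "s * h y \<le> exp (- s * y) * p t y" if "0 < s" for s y
  proof (cases "y < 0")
    case True
    have "- s * y \<le> exp (- s * y)" using exp_ge_add_one_self[of "- s * y"] by linarith
    then have "- s * y * p t y \<le> exp (- s * y) * p t y" using p_nonneg[OF assms] by (rule mult_right_mono)
    then show ?thesis using True by (simp add: h_def algebra_simps)
  qed (use p_nonneg[OF assms, of y] in \<open>simp add: h_def\<close>)
  have h_int: "integrable lborel h"
    using h_le[of 1] h_nonneg p_nonneg[OF assms]
    by (intro Bochner_Integration.integrable_bound[OF integrable_Laplace_p[OF assms, of 1]]) auto
  \<comment> \<open>Since the Laplace transform is at most 1, the negative part carries no mass.\<close>
  have bound: "s * (\<integral>y. h y \<partial>lborel) \<le> 1" if "0 < s" for s
  proof -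
    have "s * (\<integral>y. h y \<partial>lborel) \<le> (\<integral>y. exp (- s * y) * p t y \<partial>lborel)"
      using h_int h_le[OF that] integrable_Laplace_p[OF assms, of s] that
      by (subst integral_mult_right_zero[symmetric]) (intro integral_mono, auto)
    also have "\<dots> \<le> 1" using Laplace_p[OF assms, of s] assms that by simp
    finally show ?thesis .
  qed
  have "(\<integral>y. h y \<partial>lborel) \<le> 0"
  proof (rule ccontr)
    assume "\<not> (\<integral>y. h y \<partial>lborel) \<le> 0"
    with bound[of "2 / (\<integral>y. h y \<partial>lborel)"] show False by simp
  qed
  then have "AE y in lborel. h y = 0"
    using integral_nonneg_eq_0_iff_AE[OF h_int] h_nonneg by (simp add: antisym)
  then show ?thesis using AE_lborel_singleton[of 0]
    by eventually_elim (auto simp: h_def)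
qed

lemma AE_p_scaling:
  assumes "0 < t"
  shows "AE y in lborel. p t y = t powr (-1/g) * p 1 (t powr (-1/g) * y)"
proof -
  define c where "c = t powr (-1/g)"
  have "0 < c" using assms by (simp add: c_def)
  have affine: "(\<integral>y. f (c * y) \<partial>lborel) = (\<integral>u. f u \<partial>lborel) / c" for f :: "real \<Rightarrow> real"
    using lborel_integral_real_affine[of c f 0] \<open>0 < c\<close> by simp
  have scaled_power: "(s / c) powr g = t * s powr g" if "0 \<le> s" for s
  proof -
    have "(s / c) powr g = s powr g * (t powr (1/g)) powr g"
      using that assms by (simp add: c_def powr_minus divide_inverse powr_mult)
    also have "(t powr (1/g)) powr g = t" using assms index_pos by (simp add: powr_powr)
    finally show ?thesis by simp
  qed
  show ?thesis
    unfolding c_def[symmetric]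
  proof (rule Laplace_transform_unique)
    show "(\<lambda>y. c * p 1 (c * y)) \<in> borel_measurable borel" by measurable
    show "0 \<le> c * p 1 (c * y)" for y using \<open>0 < c\<close> p_nonneg[of 1] by simp
    show "integrable lborel (\<lambda>y. c * p 1 (c * y))"
      using lborel_integrable_real_affine[OF integrable_p[of 1], of c 0] \<open>0 < c\<close> by simp
    have "AE y in lborel. 0 + c * y \<le> 0 \<longrightarrow> p 1 (0 + c * y) = 0"
      using \<open>0 < c\<close> AE_p_eq_0_nonpos[of 1] by (intro AE_borel_affine) auto
    then show "AE y in lborel. y \<le> 0 \<longrightarrow> c * p 1 (c * y) = 0"
      by eventually_elim (use \<open>0 < c\<close> in \<open>auto simp: mult_le_0_iff\<close>)
    fix s :: real assume "0 \<le> s"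
    have "(\<integral>y. exp (- s * y) * (c * p 1 (c * y)) \<partial>lborel)
        = c * (\<integral>y. exp (- (s / c) * (c * y)) * p 1 (c * y) \<partial>lborel)"
      using \<open>0 < c\<close> by (simp add: mult_ac)
    also have "\<dots> = exp (- t * s powr g)"
      using affine[of "\<lambda>u. exp (- (s / c) * u) * p 1 u"] Laplace_p[of 1 "s / c"] \<open>0 < c\<close> \<open>0 \<le> s\<close>
      by (simp add: scaled_power)
    finally show "(\<integral>y. exp (- s * y) * p t y \<partial>lborel) = (\<integral>y. exp (- s * y) * (c * p 1 (c * y)) \<partial>lborel)"
      using Laplace_p[OF assms \<open>0 \<le> s\<close>] by simp
  qed (use assms in \<open>simp_all add: p_nonneg integrable_p AE_p_eq_0_nonpos\<close>)
qed

end

section \<open>The law of \<open>ln Y\<^sub>1\<close>\<close>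

context stable_subordinator
begin

definition log_density :: "real \<Rightarrow> real" where
  "log_density w = exp w * p 1 (exp w)"

lemma measurable_log_density [measurable]: "log_density \<in> borel_measurable borel"
  unfolding log_density_def by measurable

lemma log_density_nonneg: "0 \<le> log_density w"
  using p_nonneg[of 1] by (simp add: log_density_def)

lemma
  assumes "0 \<le> s"
  shows integrable_Laplace_log_density: "integrable lborel (\<lambda>w. exp (- s * exp w) * log_density w)"
    and Laplace_log_density: "(\<integral>w. exp (- s * exp w) * log_density w \<partial>lborel) = exp (- (s powr g))"
proof -
  have "AE y in lborel. y \<le> 0 \<longrightarrow> exp (- s * y) * p 1 y = 0"
    using AE_p_eq_0_nonpos[of 1] by (auto elim!: eventually_mono)
  note Ioi = set_integrable_Ioi_iff_integrable[OF this] set_integral_Ioi_eq_integral[OF this]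
  show "integrable lborel (\<lambda>w. exp (- s * exp w) * log_density w)"
    using set_integrable_Ioi_exp_subst[of "\<lambda>y. exp (- s * y) * p 1 y"] Ioi integrable_Laplace_p[OF _ assms, of 1]
    by (simp add: log_density_def mult.left_commute)
  show "(\<integral>w. exp (- s * exp w) * log_density w \<partial>lborel) = exp (- (s powr g))"
    using set_integral_Ioi_exp_subst[of "\<lambda>y. exp (- s * y) * p 1 y"] Ioi Laplace_p[OF _ assms, of 1]
    by (simp add: log_density_def mult.left_commute)
qed

lemma integrable_log_density: "integrable lborel log_density"
  using integrable_Laplace_log_density[of 0] by simp

lemma integral_log_density: "(\<integral>w. log_density w \<partial>lborel) = 1"
  using Laplace_log_density[of 0] by simp

lemma nn_integral_log_density: "(\<integral>\<^sup>+w. log_density w \<partial>lborel) = 1"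
  using nn_integral_eq_integral[OF integrable_log_density] log_density_nonneg integral_log_density by simp

lemma log_density_scaling:
  assumes "0 < t"
  shows "exp z * (t powr (-1/g) * p 1 (t powr (-1/g) * exp z)) = log_density (z - ln t / g)"
proof -
  have "t powr (-1/g) * exp z = exp (z - ln t / g)"
    using assms by (simp add: powr_def exp_diff exp_minus field_simps)
  then show ?thesis by (simp add: log_density_def mult_ac)
qed

definition autocorr :: "real \<Rightarrow> real" where
  "autocorr u = (\<integral>z. log_density z * log_density (z - u) \<partial>lborel)"

lemma measurable_autocorr [measurable]: "autocorr \<in> borel_measurable borel"
  unfolding autocorr_def
  by (rule lborel.borel_measurable_lebesgue_integral[where f="\<lambda>u z. log_density z * log_density (z - u)"]) simp

lemma Kker_eq_autocorr:
  assumes "0 < l1" and "0 < l2"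
  shows "Kker p l1 l2 = autocorr ((ln l2 - ln l1) / g) / (l1 * l2)"
proof -
  define P where "P t y = t powr (-1/g) * p 1 (t powr (-1/g) * y)" for t y
  have [measurable]: "P t \<in> borel_measurable borel" for t unfolding P_def by measurable
  have "Kker p l1 l2 = (\<integral>l\<in>{0<..}. l * (P l1 l / l1) * (P l2 l / l2) \<partial>lborel)"
    unfolding Kker_def set_lebesgue_integral_def
    using AE_p_scaling[OF assms(1)] AE_p_scaling[OF assms(2)] assms
    by (intro integral_cong_AE) (auto elim!: eventually_elim2 simp: P_def)
  also have "\<dots> = (\<integral>z. exp z *\<^sub>R (exp z * (P l1 (exp z) / l1) * (P l2 (exp z) / l2)) \<partial>lborel)"
    by (rule set_integral_Ioi_exp_subst[symmetric]) simp
  also have "\<dots> = (\<integral>z. log_density (z - ln l1 / g) * log_density (z - ln l2 / g) / (l1 * l2) \<partial>lborel)"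
  proof (rule Bochner_Integration.integral_cong[OF refl])
    fix z
    have "exp z *\<^sub>R (exp z * (P l1 (exp z) / l1) * (P l2 (exp z) / l2))
        = (exp z * P l1 (exp z)) * (exp z * P l2 (exp z)) / (l1 * l2)"
      using assms by (simp add: field_simps)
    also have "\<dots> = log_density (z - ln l1 / g) * log_density (z - ln l2 / g) / (l1 * l2)"
      unfolding P_def log_density_scaling[OF assms(1)] log_density_scaling[OF assms(2)] ..
    finally show "exp z *\<^sub>R (exp z * (P l1 (exp z) / l1) * (P l2 (exp z) / l2))
        = log_density (z - ln l1 / g) * log_density (z - ln l2 / g) / (l1 * l2)" .
  qed
  also have "\<dots> = (\<integral>z. log_density (z - ln l1 / g) * log_density (z - ln l2 / g) \<partial>lborel) / (l1 * l2)"
    by simp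
  also have "(\<integral>z. log_density (z - ln l1 / g) * log_density (z - ln l2 / g) \<partial>lborel) = autocorr ((ln l2 - ln l1) / g)"
    using lborel_integral_real_affine[of 1 "\<lambda>z. log_density (z - ln l1 / g) * log_density (z - ln l2 / g)" "ln l1 / g"]
    by (simp add: autocorr_def diff_divide_distrib algebra_simps)
  finally show ?thesis .
qed

end

lemma measurable_cis [measurable]: "cis \<in> borel_measurable borel"
  by (intro borel_measurable_continuous_onI) (simp add: cis_conv_exp continuous_intros)

context stable_subordinator
begin

definition log_charfun :: "real \<Rightarrow> complex" where
  "log_charfun s = (\<integral>w. complex_of_real (log_density w) * cis (s * w) \<partial>lborel)"

lemma log_charfun_0: "log_charfun 0 = 1"
  using integral_log_density by (simp add: log_charfun_def)

lemma integrable_autocorr_kernel: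
  "integrable (lborel \<Otimes>\<^sub>M lborel) (\<lambda>(u, z). complex_of_real (log_density z * log_density (z - u)) * cis (s * u))"
  (is "integrable _ (\<lambda>(u, z). ?H u z)")
proof (rule integrableI_bounded)
  have inner: "(\<integral>\<^sup>+u. ennreal (log_density z * log_density (z - u)) \<partial>lborel) = ennreal (log_density z)" for z
  proof -
    have "(\<integral>\<^sup>+u. ennreal (log_density z * log_density (z - u)) \<partial>lborel)
        = ennreal (log_density z) * (\<integral>\<^sup>+u. ennreal (log_density (z - u)) \<partial>lborel)"
      using log_density_nonneg by (subst nn_integral_cmult[symmetric]) (auto simp: ennreal_mult)
    also have "(\<integral>\<^sup>+u. ennreal (log_density (z - u)) \<partial>lborel) = 1"
      using nn_integral_real_affine[of "\<lambda>u. ennreal (log_density u)" "-1" z] nn_integral_log_density by simp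
    finally show ?thesis by simp
  qed
  have "(\<integral>\<^sup>+x. ennreal (norm (case x of (u, z) \<Rightarrow> ?H u z)) \<partial>(lborel \<Otimes>\<^sub>M lborel))
      = (\<integral>\<^sup>+z. \<integral>\<^sup>+u. ennreal (log_density z * log_density (z - u)) \<partial>lborel \<partial>lborel)"
    using lborel_pair.nn_integral_snd[of "\<lambda>x. ennreal (norm (case x of (u, z) \<Rightarrow> ?H u z))"]
    by (simp add: norm_mult log_density_nonneg)
  also have "\<dots> = 1" by (simp add: inner nn_integral_log_density)
  finally show "(\<integral>\<^sup>+x. ennreal (norm (case x of (u, z) \<Rightarrow> ?H u z)) \<partial>(lborel \<Otimes>\<^sub>M lborel)) < \<infinity>"
    by simp
qed simp

lemma
  shows integrable_Fourier_autocorr: "integrable lborel (\<lambda>u. complex_of_real (autocorr u) * cis (s * u))"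
    and Fourier_autocorr:
      "(\<integral>u. complex_of_real (autocorr u) * cis (s * u) \<partial>lborel) = log_charfun s * log_charfun (- s)"
proof -
  define H where "H u z = complex_of_real (log_density z * log_density (z - u)) * cis (s * u)" for u z
  note H_int = integrable_autocorr_kernel[of s, folded H_def]
  have H_u: "(\<integral>z. H u z \<partial>lborel) = complex_of_real (autocorr u) * cis (s * u)" for u
    by (simp add: H_def autocorr_def del: of_real_mult)
  show "integrable lborel (\<lambda>u. complex_of_real (autocorr u) * cis (s * u))"
    using lborel_pair.integrable_fst[OF H_int] by (simp add: H_u)
  have H_z: "(\<integral>u. H u z \<partial>lborel) = complex_of_real (log_density z) * cis (s * z) * log_charfun (- s)" for z
  proof -
    have "H (z + (-1) * x) z
        = complex_of_real (log_density z) * cis (s * z) * (complex_of_real (log_density x) * cis (- s * x))" for x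
    proof -
      have "cis (s * (z - x)) = cis (s * z) * cis (- s * x)" by (simp add: cis_mult algebra_simps)
      then show ?thesis by (simp add: H_def)
    qed
    then have "(\<integral>u. H u z \<partial>lborel)
        = (\<integral>x. complex_of_real (log_density z) * cis (s * z) * (complex_of_real (log_density x) * cis (- s * x)) \<partial>lborel)"
      using lborel_integral_real_affine[of "-1" "\<lambda>u. H u z" z] by simp
    then show ?thesis by (simp add: log_charfun_def)
  qed
  have "(\<integral>u. complex_of_real (autocorr u) * cis (s * u) \<partial>lborel) = (\<integral>u. \<integral>z. H u z \<partial>lborel \<partial>lborel)"
    by (simp add: H_u)
  also have "\<dots> = (\<integral>z. \<integral>u. H u z \<partial>lborel \<partial>lborel)"
    using lborel_pair.Fubini_integral[OF H_int] by simp
  also have "\<dots> = log_charfun s * log_charfun (- s)"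
    by (simp add: H_z log_charfun_def)
  finally show "(\<integral>u. complex_of_real (autocorr u) * cis (s * u) \<partial>lborel) = log_charfun s * log_charfun (- s)" .
qed

end


section \<open>Mellin transform of \<open>Y\<^sub>1\<close>\<close>

lemma
  fixes z :: complex
  assumes "0 < Re z"
  shows integrable_Gamma_integral_log: "integrable lborel (\<lambda>w. exp (z * of_real w) * of_real (exp (- exp w)))"
    and Gamma_integral_log: "(\<integral>w. exp (z * of_real w) * of_real (exp (- exp w)) \<partial>lborel) = Gamma z"
proof -
  define F where "F t = indicator {0<..} t *\<^sub>R (complex_of_real t powr (z - 1) / of_real (exp t))" for t :: real
  have [measurable]: "F \<in> borel_measurable borel"
    unfolding F_def
    by (rule borel_measurable_continuous_on_indicator) (auto intro!: continuous_intros simp: complex_nonpos_Reals_iff)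
  have Ioi: "indicator {0<..} t *\<^sub>R F t = F t" for t by (simp add: F_def indicator_def)
  have leb: "set_integrable lebesgue {0<..} F"
    using absolutely_integrable_Gamma_integral'[OF assms]
    unfolding set_integrable_def Ioi by (simp add: F_def)
  then have "set_integrable lborel {0<..} F"
    unfolding set_integrable_def by (simp add: integrable_completion)
  moreover
  have "(F has_integral Gamma z) {0<..}"
    using Gamma_integral_complex'[OF assms] by (rule has_integral_cong[THEN iffD1, rotated]) (simp add: F_def)
  then have "(\<integral>t\<in>{0<..}. F t \<partial>lebesgue) = Gamma z"
    using set_lebesgue_integral_eq_integral(2)[OF leb] by (simp add: integral_unique)
  then have "(\<integral>t\<in>{0<..}. F t \<partial>lborel) = Gamma z"
    unfolding set_lebesgue_integral_def by (simp add: integral_completion)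
  moreover have "exp v *\<^sub>R F (exp v) = exp (z * of_real v) * of_real (exp (- exp v))" for v
  proof -
    have "complex_of_real (exp v) * complex_of_real (exp v) powr (z - 1) = exp (of_real v + (z - 1) * of_real v)"
      by (simp add: powr_def Ln_of_real exp_of_real[symmetric] mult_exp_exp del: exp_of_real)
    also have "of_real v + (z - 1) * of_real v = z * of_real v" by (simp add: algebra_simps)
    finally show ?thesis by (simp add: F_def scaleR_conv_of_real exp_minus divide_inverse mult.assoc)
  qed
  ultimately show "integrable lborel (\<lambda>w. exp (z * of_real w) * of_real (exp (- exp w)))"
    and "(\<integral>w. exp (z * of_real w) * of_real (exp (- exp w)) \<partial>lborel) = Gamma z"
    using set_integrable_Ioi_exp_subst[of F] set_integral_Ioi_exp_subst[of F] by simp_all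
qed

lemma integrable_exp_mult_exp_exp:
  fixes a b :: real
  assumes "0 < a" and "0 < b"
  shows "integrable lborel (\<lambda>v. exp (a * v) * exp (- exp (b * v)))"
proof -
  have "integrable lborel (\<lambda>u. complex_of_real (exp (a / b * u) * exp (- exp u)))"
    using integrable_Gamma_integral_log[of "of_real (a / b)"] assms
    by (simp add: exp_of_real[symmetric] del: exp_of_real)
  then have "integrable lborel (\<lambda>u. exp (a / b * u) * exp (- exp u))"
    by (subst complex_of_real_integrable_eq[symmetric])
  from lborel_integrable_real_affine[OF this, of b 0] show ?thesis
    using assms by simp
qed

lemma complex_notin_nonpos_Ints: "0 < Re z \<or> Im z \<noteq> 0 \<Longrightarrow> (z :: complex) \<notin> \<int>\<^sub>\<le>\<^sub>0"
  by (auto elim!: nonpos_Ints_cases)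

context stable_subordinator
begin

text \<open>\<open>log_moment z\<close> is the moment \<open>E[Y\<^sub>1\<^sup>-\<^sup>z]\<close>, written in the variable \<open>ln Y\<^sub>1\<close>.\<close>

definition log_moment :: "complex \<Rightarrow> complex" where
  "log_moment z = (\<integral>w. complex_of_real (log_density w) * exp (- (z * of_real w)) \<partial>lborel)"

lemma integrable_log_moment_kernel:
  assumes "0 < Re z"
  shows "integrable (lborel \<Otimes>\<^sub>M lborel)
           (\<lambda>(v, w). exp (z * of_real v) * complex_of_real (exp (- exp (v + w)) * log_density w))"
    (is "integrable _ (\<lambda>(v, w). ?H v w)")
proof (rule integrableI_bounded)
  have inner: "(\<integral>\<^sup>+w. norm (?H v w) \<partial>lborel) = ennreal (exp (Re z * v) * exp (- exp (g * v)))" for v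
  proof -
    have "(\<integral>\<^sup>+w. norm (?H v w) \<partial>lborel)
        = (\<integral>\<^sup>+w. ennreal (exp (Re z * v)) * ennreal (exp (- exp v * exp w) * log_density w) \<partial>lborel)"
      using log_density_nonneg
      by (intro nn_integral_cong) (simp add: norm_mult exp_add ennreal_mult[symmetric] abs_mult)
    also have "\<dots> = ennreal (exp (Re z * v)) * (\<integral>\<^sup>+w. ennreal (exp (- exp v * exp w) * log_density w) \<partial>lborel)"
      by (rule nn_integral_cmult) measurable
    also have "(\<integral>\<^sup>+w. ennreal (exp (- exp v * exp w) * log_density w) \<partial>lborel) = ennreal (exp (- (exp v powr g)))"
      using nn_integral_eq_integral[OF integrable_Laplace_log_density[of "exp v"]] Laplace_log_density[of "exp v"]
        log_density_nonneg by simp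
    finally show ?thesis by (simp add: ennreal_mult powr_def)
  qed
  have "(\<integral>\<^sup>+x. norm (case x of (v, w) \<Rightarrow> ?H v w) \<partial>(lborel \<Otimes>\<^sub>M lborel))
      = (\<integral>\<^sup>+v. \<integral>\<^sup>+w. norm (?H v w) \<partial>lborel \<partial>lborel)"
    using lborel.nn_integral_fst[of "\<lambda>x. ennreal (norm (case x of (v, w) \<Rightarrow> ?H v w))" lborel] by simp
  also have "\<dots> = (\<integral>\<^sup>+v. ennreal (exp (Re z * v) * exp (- exp (g * v))) \<partial>lborel)"
    by (simp only: inner)
  also have "\<dots> = ennreal (\<integral>v. exp (Re z * v) * exp (- exp (g * v)) \<partial>lborel)"
    using integrable_exp_mult_exp_exp[OF assms index_pos] by (intro nn_integral_eq_integral) auto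
  finally show "(\<integral>\<^sup>+x. norm (case x of (v, w) \<Rightarrow> ?H v w) \<partial>(lborel \<Otimes>\<^sub>M lborel)) < \<infinity>"
    by simp
qed simp

text \<open>For \<open>y > 0\<close>, \<open>\<Gamma>(z) y\<^sup>-\<^sup>z = \<integral> v\<^sup>z\<^sup>-\<^sup>1 e\<^sup>-\<^sup>v\<^sup>y dv\<close>; averaging over the law of \<open>Y\<^sub>1\<close> turns
  \<open>e\<^sup>-\<^sup>v\<^sup>y\<close> into \<open>e\<^sup>-\<^sup>v\<^sup>g\<close>, and \<open>\<integral> v\<^sup>z\<^sup>-\<^sup>1 e\<^sup>-\<^sup>v\<^sup>g dv = \<Gamma>(z/g)/g\<close>.\<close>

lemma
  assumes "0 < Re z"
  shows integrable_log_moment: "integrable lborel (\<lambda>w. complex_of_real (log_density w) * exp (- (z * of_real w)))"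
    and Gamma_mult_log_moment: "Gamma z * log_moment z = Gamma (z / of_real g) / of_real g"
proof -
  define H where "H v w = exp (z * of_real v) * complex_of_real (exp (- exp (v + w)) * log_density w)" for v w :: real
  note H_int = integrable_log_moment_kernel[OF assms, folded H_def]
  have H_v: "(\<integral>v. H v w \<partial>lborel) = complex_of_real (log_density w) * exp (- (z * of_real w)) * Gamma z" for w
  proof -
    have "H (- w + 1 * x) w
        = complex_of_real (log_density w) * exp (- (z * of_real w)) * (exp (z * of_real x) * of_real (exp (- exp x)))" for x
    proof -
      have "exp (z * of_real (- w + x)) = exp (- (z * of_real w)) * exp (z * of_real x)"
        by (simp add: mult_exp_exp algebra_simps)
      then show ?thesis by (simp add: H_def)
    qed
    then show ?thesis
      using lborel_integral_real_affine[of 1 "\<lambda>v. H v w" "- w"] Gamma_integral_log[OF assms] by simp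
  qed
  have H_w: "(\<integral>w. H v w \<partial>lborel) = exp (z * of_real v) * of_real (exp (- exp (g * v)))" for v
  proof -
    have "(\<integral>w. H v w \<partial>lborel) = exp (z * of_real v) * of_real (\<integral>w. exp (- exp v * exp w) * log_density w \<partial>lborel)"
      by (simp add: H_def exp_add del: of_real_mult)
    also have "(\<integral>w. exp (- exp v * exp w) * log_density w \<partial>lborel) = exp (- (exp v powr g))"
      by (rule Laplace_log_density) simp
    also have "exp v powr g = exp (g * v)" by (simp add: powr_def)
    finally show ?thesis .
  qed
  have "Gamma z \<noteq> 0" using assms by (intro Gamma_nonzero complex_notin_nonpos_Ints) simp
  then show "integrable lborel (\<lambda>w. complex_of_real (log_density w) * exp (- (z * of_real w)))"
    using integrable_divide[OF lborel_pair.integrable_snd[OF H_int], of "Gamma z"] by (simp add: H_v)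
  have "Gamma z * log_moment z = (\<integral>w. \<integral>v. H v w \<partial>lborel \<partial>lborel)"
    by (simp add: H_v log_moment_def mult.commute)
  also have "\<dots> = (\<integral>v. exp (z * of_real v) * of_real (exp (- exp (g * v))) \<partial>lborel)"
    using lborel_pair.Fubini_integral[OF H_int] by (simp add: H_w)
  also have "\<dots> = (\<integral>u. exp ((z / of_real g) * of_real u) * of_real (exp (- exp u)) \<partial>lborel) / of_real g"
    using lborel_integral_real_affine[of "1/g" "\<lambda>v. exp (z * of_real v) * of_real (exp (- exp (g * v)))" 0] index_pos
    by (simp add: scaleR_conv_of_real field_simps)
  also have "\<dots> = Gamma (z / of_real g) / of_real g"
    using Gamma_integral_log[of "z / of_real g"] assms index_pos by simp
  finally show "Gamma z * log_moment z = Gamma (z / of_real g) / of_real g" .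
qed

lemma norm_log_moment_integrand_le:
  assumes "0 < Re z" and "Re z \<le> 1"
  shows "norm (complex_of_real (log_density w) * exp (- (z * of_real w)))
           \<le> log_density w + log_density w * exp (- w)"
proof -
  have "exp (- (Re z * w)) \<le> 1 + exp (- w)"
  proof (cases "0 \<le> w")
    case True
    then have "exp (- (Re z * w)) \<le> 1" using assms by simp
    then show ?thesis using exp_gt_zero[of "- w"] by linarith
  next
    case False
    then have "exp (- (Re z * w)) \<le> exp (- w)" using assms by (simp add: mult_le_cancel_right1)
    then show ?thesis by linarith
  qed
  then have "log_density w * exp (- (Re z * w)) \<le> log_density w * (1 + exp (- w))"
    using log_density_nonneg by (rule mult_left_mono)
  then show ?thesis by (simp add: norm_mult log_density_nonneg algebra_simps)
qed

text \<open>On the imaginary axis the Mellin transform is reached as a limit from \<open>Re z > 0\<close>.\<close>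

lemma log_charfun_eq_Gamma:
  assumes "s \<noteq> 0"
  shows "log_charfun s = Gamma (- (\<i> * of_real s) / of_real g) / (of_real g * Gamma (- (\<i> * of_real s)))"
proof -
  define \<zeta> where "\<zeta> = - (\<i> * complex_of_real s)"
  define z where "z n = complex_of_real (inverse (real (Suc n))) + \<zeta>" for n
  have Re_z: "0 < Re (z n)" "Re (z n) \<le> 1" for n by (simp_all add: z_def \<zeta>_def field_simps)
  have z_lim: "z \<longlonglongrightarrow> \<zeta>"
    unfolding z_def using tendsto_add[OF tendsto_of_real[OF LIMSEQ_inverse_real_of_nat] tendsto_const[of \<zeta>]]
    by simp
  have "(\<lambda>n. log_moment (z n)) \<longlonglongrightarrow> log_moment \<zeta>"
    unfolding log_moment_def
  proof (rule integral_dominated_convergence[where w="\<lambda>w. log_density w + log_density w * exp (- w)"])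
    show "integrable lborel (\<lambda>w. log_density w + log_density w * exp (- w))"
      using integrable_log_density integrable_log_moment[of 1]
      by (simp add: complex_of_real_integrable_eq[symmetric] exp_of_real[symmetric] del: exp_of_real)
    show "AE w in lborel. norm (complex_of_real (log_density w) * exp (- (z n * of_real w)))
            \<le> log_density w + log_density w * exp (- w)" for n
      using norm_log_moment_integrand_le[OF Re_z] by simp
  qed (auto intro!: tendsto_intros z_lim)
  moreover have "log_moment (z n) = Gamma (z n / of_real g) / (of_real g * Gamma (z n))" for n
    using Gamma_mult_log_moment[OF Re_z(1)] Gamma_nonzero[OF complex_notin_nonpos_Ints] Re_z(1)[of n] index_pos
    by (simp add: field_simps)
  moreover have "Gamma \<zeta> \<noteq> 0"
    using assms by (intro Gamma_nonzero complex_notin_nonpos_Ints) (simp add: \<zeta>_def)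
  then have "(\<lambda>n. Gamma (z n / of_real g) / (of_real g * Gamma (z n)))
                   \<longlonglongrightarrow> Gamma (\<zeta> / of_real g) / (of_real g * Gamma \<zeta>)"
    using assms index_pos
    by (intro tendsto_intros z_lim complex_notin_nonpos_Ints Gamma_nonzero) (simp_all add: \<zeta>_def)
  moreover have "log_charfun s = log_moment \<zeta>"
    unfolding log_charfun_def log_moment_def \<zeta>_def
    by (intro Bochner_Integration.integral_cong) (auto simp: cis_conv_exp algebra_simps)
  ultimately show ?thesis using LIMSEQ_unique by (simp add: \<zeta>_def)
qed

end

lemma sin_ii_times_of_real: "sin (\<i> * complex_of_real t) = \<i> * of_real (sinh t)"
  using sinh_real[of t] by (simp add: sinh_def exp_minus)

lemma Gamma_ii_times_mult_Gamma_minus: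
  assumes "y \<noteq> 0"
  shows "Gamma (\<i> * of_real y) * Gamma (- (\<i> * of_real y)) = of_real (pi / (y * sinh (pi * y)))"
proof -
  have "Gamma (- (\<i> * of_real y) + 1) = - (\<i> * of_real y) * Gamma (- (\<i> * of_real y))"
    using assms by (intro Gamma_plus1 complex_notin_nonpos_Ints) simp
  moreover have "Gamma (\<i> * of_real y) * Gamma (1 - \<i> * of_real y) = of_real pi / (\<i> * of_real (sinh (pi * y)))"
    using Gamma_reflection_complex[of "\<i> * of_real y"] sin_ii_times_of_real[of "pi * y"] by (simp add: mult_ac)
  moreover have "sinh (pi * y) \<noteq> 0" using assms by simp
  ultimately show ?thesis using assms by (simp add: field_simps)
qed

context stable_subordinator
begin

lemma log_charfun_product:
  assumes "x \<noteq> 0"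
  shows "of_real g * log_charfun (g * x) * log_charfun (- (g * x)) = of_real (sinh (g * pi * x) / sinh (pi * x))"
proof -
  have "g * x \<noteq> 0" using assms index_pos by simp
  have "log_charfun (g * x) = Gamma (- (\<i> * of_real x)) / (of_real g * Gamma (- (\<i> * of_real (g * x))))"
    and "log_charfun (- (g * x)) = Gamma (\<i> * of_real x) / (of_real g * Gamma (\<i> * of_real (g * x)))"
    using log_charfun_eq_Gamma[of "g * x"] log_charfun_eq_Gamma[of "- (g * x)"] \<open>g * x \<noteq> 0\<close> index_pos
    by simp_all
  then have "of_real g * log_charfun (g * x) * log_charfun (- (g * x))
      = (Gamma (\<i> * of_real x) * Gamma (- (\<i> * of_real x))) /
        (of_real g * (Gamma (\<i> * of_real (g * x)) * Gamma (- (\<i> * of_real (g * x)))))"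
    using index_pos by (simp add: field_simps)
  also have "\<dots> = of_real ((pi / (x * sinh (pi * x))) / (g * (pi / ((g * x) * sinh (pi * (g * x))))))"
    unfolding Gamma_ii_times_mult_Gamma_minus[OF assms] Gamma_ii_times_mult_Gamma_minus[OF \<open>g * x \<noteq> 0\<close>] by simp
  also have "(pi / (x * sinh (pi * x))) / (g * (pi / ((g * x) * sinh (pi * (g * x))))) = sinh (g * pi * x) / sinh (pi * x)"
    using index_pos assms \<open>g * x \<noteq> 0\<close> by (simp add: field_simps)
  finally show ?thesis .
qed

text \<open>The substitution \<open>l\<^sub>2 = l\<^sub>1 e\<^sup>g\<^sup>u\<close> turns the Mellin transform of \<open>Kker p l\<^sub>1\<close> into
  the Fourier transform of \<open>autocorr\<close> at \<open>g x\<close>.\<close>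

lemma
  assumes "0 < l1"
  shows set_integrable_Mellin_Kker: "set_integrable lborel {0<..}
           (\<lambda>l2. complex_of_real (Kker p l1 l2) * complex_of_real l2 powr (\<i> * complex_of_real x))"
    and Mellin_Kker: "(\<integral>l2\<in>{0<..}. complex_of_real (Kker p l1 l2) * complex_of_real l2 powr (\<i> * complex_of_real x) \<partial>lborel)
       = of_real g * (cis (x * ln l1) / of_real l1) * (log_charfun (g * x) * log_charfun (- (g * x)))"
proof -
  define \<Psi> where "\<Psi> l2 = complex_of_real (autocorr ((ln l2 - ln l1) / g) / (l1 * l2)) * cis (x * ln l2)" for l2
  have [measurable]: "\<Psi> \<in> borel_measurable borel" unfolding \<Psi>_def by measurable
  have Kker_\<Psi>: "indicator {0<..} l2 *\<^sub>R (complex_of_real (Kker p l1 l2) * complex_of_real l2 powr (\<i> * complex_of_real x))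
          = indicator {0<..} l2 *\<^sub>R \<Psi> l2" for l2
  proof (cases "0 < l2")
    case True
    then have "complex_of_real l2 powr (\<i> * complex_of_real x) = cis (x * ln l2)"
      by (simp add: powr_def Ln_of_real cis_conv_exp mult_ac)
    then show ?thesis using True assms by (simp add: Kker_eq_autocorr \<Psi>_def)
  qed simp
  define G where "G v = exp v *\<^sub>R \<Psi> (exp v)" for v
  have G_affine: "G (ln l1 + g * u)
      = (cis (x * ln l1) / of_real l1) * (complex_of_real (autocorr u) * cis ((g * x) * u))" for u
  proof -
    have "cis (x * (ln l1 + g * u)) = cis (x * ln l1) * cis ((g * x) * u)"
      by (simp add: cis_mult algebra_simps)
    then show ?thesis using assms index_pos by (simp add: G_def \<Psi>_def scaleR_conv_of_real)
  qed
  have "integrable lborel (\<lambda>u. G (ln l1 + g * u))"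
    unfolding G_affine using integrable_Fourier_autocorr by simp
  then have "integrable lborel G"
    using lborel_integrable_real_affine_iff[of g G "ln l1"] index_pos by simp
  then show "set_integrable lborel {0<..}
           (\<lambda>l2. complex_of_real (Kker p l1 l2) * complex_of_real l2 powr (\<i> * complex_of_real x))"
    using set_integrable_Ioi_exp_subst[of \<Psi>] unfolding set_integrable_def Kker_\<Psi> G_def by simp
  have "(\<integral>l2\<in>{0<..}. complex_of_real (Kker p l1 l2) * complex_of_real l2 powr (\<i> * complex_of_real x) \<partial>lborel)
      = (\<integral>v. G v \<partial>lborel)"
    using set_integral_Ioi_exp_subst[of \<Psi>] unfolding set_lebesgue_integral_def Kker_\<Psi> G_def by simp
  also have "\<dots> = g *\<^sub>R (\<integral>u. G (ln l1 + g * u) \<partial>lborel)"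
    using lborel_integral_real_affine[of g G "ln l1"] index_pos by simp
  also have "\<dots> = of_real g * (cis (x * ln l1) / of_real l1) * (log_charfun (g * x) * log_charfun (- (g * x)))"
    using Fourier_autocorr[of "g * x"] by (simp add: G_affine scaleR_conv_of_real)
  finally show "(\<integral>l2\<in>{0<..}. complex_of_real (Kker p l1 l2) * complex_of_real l2 powr (\<i> * complex_of_real x) \<partial>lborel)
       = of_real g * (cis (x * ln l1) / of_real l1) * (log_charfun (g * x) * log_charfun (- (g * x)))" .
qed

end

lemma complex_powr_ii_times_minus_1:
  assumes "0 < l"
  shows "complex_of_real l powr (\<i> * complex_of_real x - 1) = cis (x * ln l) / of_real l"
proof -
  have "complex_of_real l powr (\<i> * complex_of_real x - 1) = exp (\<i> * of_real (x * ln l)) / exp (of_real (ln l))"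
    using assms by (simp add: powr_def Ln_of_real algebra_simps exp_diff)
  then show ?thesis using assms by (simp add: cis_conv_exp exp_of_real)
qed

theorem proposition4p11:
  fixes g :: real and p :: "real \<Rightarrow> real \<Rightarrow> real" and l1 x :: real
  assumes "1/2 < g" and "g < 1"
    and "stable_subordinator_density g p"
    and "0 < l1"
  shows "set_integrable lborel {0<..}
           (\<lambda>l2. complex_of_real (Kker p l1 l2) * (complex_of_real l2) powr (\<i> * complex_of_real x))
    \<and> (LINT l2:{0<..}|lborel. complex_of_real (Kker p l1 l2) * (complex_of_real l2) powr (\<i> * complex_of_real x))
       = (if x \<noteq> 0
          then complex_of_real (sinh (g * pi * x) / sinh (pi * x)) * (complex_of_real l1) powr (\<i> * complex_of_real x - 1)
          else complex_of_real (g / l1))"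
proof -
  interpret stable_subordinator g p
    using assms(1,3) by unfold_locales auto
  show ?thesis
  proof (cases "x = 0")
    case True
    then show ?thesis
      using set_integrable_Mellin_Kker[OF assms(4), of x] Mellin_Kker[OF assms(4), of x]
      by (simp add: log_charfun_0)
  next
    case False
    have "(\<integral>l2\<in>{0<..}. complex_of_real (Kker p l1 l2) * complex_of_real l2 powr (\<i> * complex_of_real x) \<partial>lborel)
        = (of_real g * log_charfun (g * x) * log_charfun (- (g * x))) * (cis (x * ln l1) / of_real l1)"
      unfolding Mellin_Kker[OF assms(4)] by (simp add: mult_ac)
    also have "\<dots> = complex_of_real (sinh (g * pi * x) / sinh (pi * x)) * complex_of_real l1 powr (\<i> * complex_of_real x - 1)"
      unfolding log_charfun_product[OF False] complex_powr_ii_times_minus_1[OF assms(4)] ..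
    finally show ?thesis
      using set_integrable_Mellin_Kker[OF assms(4)] False by simp
  qed
qed

end
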